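(* Let $n\ge2$, let $y_{\mathrm{ref}}=(0,\dots,0,1)\in O_n$ and $\ket{\psi_{\mathrm{ref}}}=\ket{\psi_{y_{\mathrm{ref}}}}$. For $y\in O_n$ define $u=y\oplus y_{\mathrm{ref}}\in\{0,1\}^n$, $v\in\{0,1\}^n$ by $v_l=\sum_{j=1}^{l-1}u_j \bmod 2$ for $l=1,\dots,n$, and $v'\in\{0,1\}^{n-1}$ by $v'_i=v_i+v_n \bmod 2$. Let $D(u,v')=Z(v')X(u)$ where $X(u)=\bigotimes_{i=1}^{n-1}X_i^{u_i}$ and $Z(v')=\bigotimes_{i=1}^{n-1}Z_i^{v'_i}$ act on $n-1$ qubits. Then $$\ket{\psi_y}=(-1)^{v\cdot y}\,D(u,v')\ket{\psi_{\mathrm{ref}}},$$ where $v\cdot y=\sum_{i=1}^n v_iy_i \bmod 2$.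
   Context: $E_n$ and $O_n$ are the even- and odd-weight strings in $\{0,1\}^n$. For $x\in E_n$, $\ket{\psi_x}=\ket{x_1\cdots x_{n-1}}$ (computational basis of $n-1$ qubits). For $y\in O_n$, $\ket{\psi_y}=\frac1{\sqrt n}\sum_{x\in E_n,\,d_H(x,y)=1}(A_n)_{yx}\ket{\psi_x}$, where $(A_n)_{yx}=\bra{y}A_n\ket{x}$ in the $n$-qubit computational basis (qubit 1 leftmost) and $A_n=\sum_{l=1}^nZ^{\otimes(l-1)}\otimes X\otimes I^{\otimes(n-l)}$. $X_i,Z_i$ are Pauli operators on qubit $i$; $d_H$ is Hamming distance. *)

theory Defs
  imports Complex_Main
begin

text \<open>Bit strings are lists of booleans; qubit 1 is the head of the list (index 0).\<close>

definition bitstrings :: "nat \<Rightarrow> bool list set" where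
  "bitstrings m = {w. length w = m}"

definition weight :: "bool list \<Rightarrow> nat" where
  "weight x = count_list x True"

definition even_strs :: "nat \<Rightarrow> bool list set" where
  "even_strs n = {x \<in> bitstrings n. even (weight x)}"

definition odd_strs :: "nat \<Rightarrow> bool list set" where
  "odd_strs n = {x \<in> bitstrings n. odd (weight x)}"

definition hamming :: "bool list \<Rightarrow> bool list \<Rightarrow> nat" where
  "hamming x y = card {i. i < length x \<and> x ! i \<noteq> y ! i}"

definition xor_str :: "bool list \<Rightarrow> bool list \<Rightarrow> bool list" where
  "xor_str x y = map2 (\<noteq>) x y"

text \<open>Single-qubit Pauli operators and their matrix elements \<open>\<langle>b|P|a\<rangle>\<close>
  (basis state True = |1>).\<close>

datatype pauli = PI | PX | PZ

fun pauli_elem :: "pauli \<Rightarrow> bool \<Rightarrow> bool \<Rightarrow> complex" where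
  "pauli_elem PI b a = (if b = a then 1 else 0)"
| "pauli_elem PX b a = (if b \<noteq> a then 1 else 0)"
| "pauli_elem PZ b a = (if b = a then (if a then -1 else 1) else 0)"

definition pstring_elem :: "pauli list \<Rightarrow> bool list \<Rightarrow> bool list \<Rightarrow> complex" where
  "pstring_elem ps y x = (\<Prod>i<length ps. pauli_elem (ps ! i) (y ! i) (x ! i))"

definition apply_op :: "nat \<Rightarrow> (bool list \<Rightarrow> bool list \<Rightarrow> complex)
    \<Rightarrow> (bool list \<Rightarrow> complex) \<Rightarrow> (bool list \<Rightarrow> complex)" where
  "apply_op m M \<phi> = (\<lambda>z. if length z = m then (\<Sum>w\<in>bitstrings m. M z w * \<phi> w) else 0)"

definition ket :: "bool list \<Rightarrow> (bool list \<Rightarrow> complex)" where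
  "ket b = (\<lambda>z. if z = b then 1 else 0)"

definition A_elem :: "nat \<Rightarrow> bool list \<Rightarrow> bool list \<Rightarrow> complex" where
  "A_elem n y x = (\<Sum>l\<in>{1..n}.
     pstring_elem (map (\<lambda>i. if i < l then PZ else if i = l then PX else PI) [1..<n+1]) y x)"

definition psi_even :: "nat \<Rightarrow> bool list \<Rightarrow> (bool list \<Rightarrow> complex)" where
  "psi_even n x = ket (take (n - 1) x)"

definition psi_odd :: "nat \<Rightarrow> bool list \<Rightarrow> (bool list \<Rightarrow> complex)" where
  "psi_odd n y = (\<lambda>z. complex_of_real (1 / sqrt (real n)) *
      (\<Sum>x\<in>{x \<in> even_strs n. hamming x y = 1}. A_elem n y x * psi_even n x z))"

definition psi :: "nat \<Rightarrow> bool list \<Rightarrow> (bool list \<Rightarrow> complex)" where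
  "psi n x = (if x \<in> even_strs n then psi_even n x else psi_odd n x)"

definition X_op :: "bool list \<Rightarrow> pauli list" where
  "X_op u = map (\<lambda>b. if b then PX else PI) u"

definition Z_op :: "bool list \<Rightarrow> pauli list" where
  "Z_op v = map (\<lambda>b. if b then PZ else PI) v"

definition D_op :: "nat \<Rightarrow> bool list \<Rightarrow> bool list \<Rightarrow> (bool list \<Rightarrow> complex) \<Rightarrow> (bool list \<Rightarrow> complex)" where
  "D_op n u v' \<phi> = apply_op (n - 1) (pstring_elem (Z_op v'))
                    (apply_op (n - 1) (pstring_elem (X_op (take (n - 1) u))) \<phi>)"

end

theory Submission
  imports Defs "HOL-Library.Z2"
begin

(* Both \<psi>_y and \<psi>_ref are superpositions of the n strings obtained by flipping one bit l
   (restricted to the first n - 1 qubits), the l-th with amplitude (-1)^|y_<l| / sqrt n coming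
   from the Z-string of A_n. Flipping commutes with XOR, so X(u) sends the l-th term of \<psi>_ref
   to the l-th term of \<psi>_y, and Z(v') multiplies it by (-1)^(v'.(y with bit l flipped)).
   Matching signs is an identity over GF(2): since v lists the prefix parities of y below
   position n and y has odd weight, |y_<l| = v.y + v'.(y with bit l flipped) mod 2. *)

(* By default simp turns + and * on bit into xor and and, which blocks ring normalisation. *)
declare add_bit_eq_xor [simp del] mult_bit_eq_and [simp del]

lemma of_nat_bit_eq: "(of_nat k :: bit) = of_bool (odd k)"
  by (induction k) auto

lemma of_bool_neq_bit: "(of_bool (p \<noteq> q) :: bit) = of_bool p + of_bool q"
  by (cases p; cases q) (simp_all add: add_bit_eq_xor)

lemma of_nat_card_eq_sum_of_bool:
  "(of_nat (card {i. i < (k::nat) \<and> P i}) :: 'a::semiring_1) = (\<Sum>i<k. of_bool (P i))"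
proof -
  have "{i. i < k \<and> P i} = {..<k} \<inter> {i. P i}" by auto
  then show ?thesis by (simp only: sum_of_bool_eq[OF finite_lessThan finite_lessThan])
qed

lemma of_nat_count_list_True:
  "(of_nat (count_list xs True) :: 'a::semiring_1) = (\<Sum>i<length xs. of_bool (xs ! i))"
  by (simp add: count_list_eq_length_filter length_filter_conv_card of_nat_card_eq_sum_of_bool)

lemma minus_one_power_card:
  assumes "finite A"
  shows "(-1 :: 'a::comm_ring_1) ^ card {i \<in> A. P i} = (\<Prod>i\<in>A. if P i then -1 else 1)"
proof -
  have "A \<inter> {i. P i} = {i \<in> A. P i}" by auto
  then have "card {i \<in> A. P i} = (\<Sum>i\<in>A. of_bool (P i))"
    using assms by simp
  then show ?thesis by (auto simp: power_sum intro!: prod.cong)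
qed

lemma prod_of_bool:
  assumes "finite A"
  shows "(\<Prod>i\<in>A. of_bool (P i) :: 'a::comm_semiring_1) = of_bool (\<forall>i\<in>A. P i)"
  using assms by (auto simp: prod_zero)

lemma minus_one_power_add_bit:
  assumes "(of_nat a :: bit) = of_nat b + of_nat c"
  shows "(-1) ^ b * (-1) ^ c = (-1 :: 'a::ring_1) ^ a"
proof -
  have "even a = even (b + c)"
    using assms by (auto simp: of_nat_bit_eq add_bit_eq_xor)
  then show ?thesis by (simp add: minus_one_power_iff flip: power_add)
qed

lemma finite_bitstrings: "finite (bitstrings m)"
  using finite_lists_length_eq[of "UNIV :: bool set" m] by (simp add: bitstrings_def)

lemma length_xor_str [simp]: "length (xor_str x y) = min (length x) (length y)"
  by (simp add: xor_str_def)

lemma nth_xor_str: "i < length x \<Longrightarrow> i < length y \<Longrightarrow> xor_str x y ! i = (x ! i \<noteq> y ! i)"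
  by (simp add: xor_str_def)

lemma take_xor_str: "take m (xor_str x y) = xor_str (take m x) (take m y)"
  by (simp add: xor_str_def take_map take_zip)

lemma xor_str_replicate_False: "xor_str x (replicate (length x) False) = x"
  by (simp add: list_eq_iff_nth_eq nth_xor_str)

definition flip_at :: "nat \<Rightarrow> bool list \<Rightarrow> bool list" where
  "flip_at l x = x[l := \<not> x ! l]"

lemma length_flip_at [simp]: "length (flip_at l x) = length x"
  by (simp add: flip_at_def)

lemma nth_flip_at: "i < length x \<Longrightarrow> flip_at l x ! i = (x ! i \<noteq> (i = l))"
  by (auto simp: flip_at_def nth_list_update)

lemma xor_str_flip_at:
  "length x = length y \<Longrightarrow> xor_str (flip_at l y) (xor_str x y) = flip_at l x"
  by (auto simp: list_eq_iff_nth_eq nth_xor_str nth_flip_at)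

lemma inj_on_flip_at: "inj_on (\<lambda>l. flip_at l x) {..<length x}"
proof (rule inj_onI)
  fix a b assume "a \<in> {..<length x}" "b \<in> {..<length x}" "flip_at a x = flip_at b x"
  then have "flip_at a x ! a = flip_at b x ! a" by simp
  with \<open>a \<in> {..<length x}\<close> show "a = b" by (auto simp: nth_flip_at)
qed

lemma hamming_eq_1_iff_flip_at:
  assumes "length x = length y"
  shows "hamming x y = 1 \<longleftrightarrow> (\<exists>l<length y. x = flip_at l y)"
proof
  assume "hamming x y = 1"
  then obtain l where l: "{i. i < length x \<and> x ! i \<noteq> y ! i} = {l}"
    unfolding hamming_def by (rule card_1_singletonE)
  then have "l < length y" using assms by auto
  moreover have "x = flip_at l y"
    using l assms by (auto simp: list_eq_iff_nth_eq nth_flip_at)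
  ultimately show "\<exists>l<length y. x = flip_at l y" by blast
next
  assume "\<exists>l<length y. x = flip_at l y"
  then obtain l where "l < length y" "x = flip_at l y" by blast
  then have "{i. i < length x \<and> x ! i \<noteq> y ! i} = {l}" by (auto simp: nth_flip_at)
  then show "hamming x y = 1" by (simp add: hamming_def)
qed

lemma odd_count_list_flip_at:
  assumes "l < length x"
  shows "odd (count_list (flip_at l x) True) \<longleftrightarrow> even (count_list x True)"
proof -
  have "(of_nat (count_list (flip_at l x) True) :: bit) = (\<Sum>i<length x. of_bool (flip_at l x ! i))"
    by (simp only: of_nat_count_list_True length_flip_at)
  also have "\<dots> = (\<Sum>i<length x. of_bool (x ! i) + of_bool (i = l))"
    by (intro sum.cong refl) (simp add: nth_flip_at of_bool_neq_bit)
  also have "\<dots> = of_nat (count_list x True) + 1"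
    using assms by (simp add: sum.distrib of_nat_count_list_True)
  finally show ?thesis by (auto simp: of_nat_bit_eq add_bit_eq_xor)
qed

lemma even_neighbours_of_odd:
  assumes "y \<in> odd_strs n"
  shows "{x \<in> even_strs n. hamming x y = 1} = (\<lambda>l. flip_at l y) ` {..<n}"
  using assms hamming_eq_1_iff_flip_at odd_count_list_flip_at
  by (fastforce simp: odd_strs_def even_strs_def bitstrings_def weight_def)

lemma A_elem_flip_at:
  assumes "length y = n" "l < n"
  shows "A_elem n y (flip_at l y) = (-1) ^ count_list (take l y) True"
proof -
  define P where "P k i = (if Suc i < k then PZ else if Suc i = k then PX else PI)" for k i
  define T where "T k = (\<Prod>i<n. pauli_elem (P k i) (y ! i) (flip_at l y ! i))" for k
  have "A_elem n y (flip_at l y) = (\<Sum>k\<in>{1..n}. T k)"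
    unfolding A_elem_def pstring_elem_def T_def P_def
    by (intro sum.cong prod.cong) (simp_all del: upt_Suc)
  also have "\<dots> = T (Suc l) + (\<Sum>k\<in>{1..n} - {Suc l}. T k)"
    using assms by (intro sum.remove) auto
  also have "(\<Sum>k\<in>{1..n} - {Suc l}. T k) = 0"
  proof (intro sum.neutral ballI)
    fix k assume "k \<in> {1..n} - {Suc l}"
    then have "pauli_elem (P k l) (y ! l) (flip_at l y ! l) = 0"
      using assms by (simp add: P_def nth_flip_at)
    then show "T k = 0"
      unfolding T_def using assms by (intro prod_zero) auto
  qed
  also have "T (Suc l) + 0 = (\<Prod>i<n. if i < l \<and> y ! i then -1 else 1)"
    unfolding T_def P_def add_0_right using assms by (intro prod.cong) (auto simp: nth_flip_at)
  also have "\<dots> = (-1) ^ card {i \<in> {..<n}. i < l \<and> y ! i}"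
    by (rule minus_one_power_card[symmetric]) simp
  also have "{i \<in> {..<n}. i < l \<and> y ! i} = {i. i < length (take l y) \<and> take l y ! i}"
    using assms by auto
  finally show ?thesis
    by (simp add: count_list_eq_length_filter length_filter_conv_card eq_commute[of True])
qed

lemma psi_odd_expansion:
  assumes "y \<in> odd_strs n"
  shows "psi n y = (\<lambda>z. \<Sum>l<n. complex_of_real (1 / sqrt (real n)) * (-1) ^ count_list (take l y) True
                              * ket (take (n - 1) (flip_at l y)) z)"
proof -
  have len: "length y = n" using assms by (simp add: odd_strs_def bitstrings_def)
  have "psi n y = psi_odd n y"
    using assms by (simp add: psi_def odd_strs_def even_strs_def)
  then show ?thesis
    unfolding psi_odd_def even_neighbours_of_odd[OF assms]
    using len inj_on_flip_at[of y]
    by (simp add: sum.reindex A_elem_flip_at psi_even_def sum_distrib_left mult.assoc)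
qed

lemma apply_op_lincomb:
  "apply_op m M (\<lambda>z. \<Sum>l\<in>L. w l * f l z) = (\<lambda>z. \<Sum>l\<in>L. w l * apply_op m M (f l) z)"
proof
  fix z
  have "(\<Sum>x\<in>bitstrings m. M z x * (\<Sum>l\<in>L. w l * f l x))
      = (\<Sum>l\<in>L. w l * (\<Sum>x\<in>bitstrings m. M z x * f l x))"
    by (simp add: sum_distrib_left mult.left_commute sum.swap[of _ "bitstrings m"])
  then show "apply_op m M (\<lambda>z. \<Sum>l\<in>L. w l * f l z) z = (\<Sum>l\<in>L. w l * apply_op m M (f l) z)"
    by (simp add: apply_op_def)
qed

lemma apply_op_ket:
  assumes "length b = m"
  shows "apply_op m M (ket b) = (\<lambda>z. if length z = m then M z b else 0)"
proof -
  have "b \<in> bitstrings m" using assms by (simp add: bitstrings_def)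
  then show ?thesis
    by (simp add: apply_op_def ket_def finite_bitstrings if_distrib[of "(*) _"] cong: if_cong)
qed

lemma pstring_elem_X_op:
  assumes "length a = m" "length z = m" "length b = m"
  shows "pstring_elem (X_op a) z b = of_bool (z = xor_str b a)"
proof -
  have "pstring_elem (X_op a) z b = (\<Prod>i<m. of_bool (z ! i = (b ! i \<noteq> a ! i)))"
    unfolding pstring_elem_def X_op_def using assms by (intro prod.cong) auto
  also have "\<dots> = of_bool (\<forall>i\<in>{..<m}. z ! i = (b ! i \<noteq> a ! i))"
    by (simp add: prod_of_bool)
  also have "(\<forall>i\<in>{..<m}. z ! i = (b ! i \<noteq> a ! i)) \<longleftrightarrow> z = xor_str b a"
    using assms by (auto simp: list_eq_iff_nth_eq nth_xor_str)
  finally show ?thesis .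
qed

lemma pstring_elem_Z_op:
  assumes "length v = m" "length z = m" "length b = m"
  shows "pstring_elem (Z_op v) z b = of_bool (z = b) * (-1) ^ card {i. i < m \<and> v ! i \<and> b ! i}"
proof -
  have "pstring_elem (Z_op v) z b
      = (\<Prod>i<m. of_bool (z ! i = b ! i) * (if v ! i \<and> b ! i then -1 else 1))"
    unfolding pstring_elem_def Z_op_def using assms by (intro prod.cong) auto
  also have "\<dots> = of_bool (\<forall>i\<in>{..<m}. z ! i = b ! i) * (-1) ^ card {i \<in> {..<m}. v ! i \<and> b ! i}"
    by (simp only: prod.distrib prod_of_bool[OF finite_lessThan] minus_one_power_card[OF finite_lessThan])
  also have "(\<forall>i\<in>{..<m}. z ! i = b ! i) \<longleftrightarrow> z = b"
    using assms by (auto simp: list_eq_iff_nth_eq)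
  finally show ?thesis by simp
qed

lemma apply_op_X_op_ket:
  assumes "length a = m" "length b = m"
  shows "apply_op m (pstring_elem (X_op a)) (ket b) = ket (xor_str b a)"
  unfolding apply_op_ket[OF assms(2)] using assms by (auto simp: pstring_elem_X_op ket_def)

lemma apply_op_Z_op_ket:
  assumes "length v = m" "length b = m"
  shows "apply_op m (pstring_elem (Z_op v)) (ket b) = (\<lambda>z. (-1) ^ card {i. i < m \<and> v ! i \<and> b ! i} * ket b z)"
  unfolding apply_op_ket[OF assms(2)] using assms by (auto simp: pstring_elem_Z_op ket_def)

lemma D_op_lincomb:
  "D_op n u v' (\<lambda>z. \<Sum>l\<in>L. w l * f l z) = (\<lambda>z. \<Sum>l\<in>L. w l * D_op n u v' (f l) z)"
  by (simp add: D_op_def apply_op_lincomb)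

lemma D_op_ket:
  assumes "n - 1 \<le> length u" "length v' = n - 1" "length b = n - 1"
  defines "b' \<equiv> xor_str b (take (n - 1) u)"
  shows "D_op n u v' (ket b) = (\<lambda>z. (-1) ^ card {i. i < n - 1 \<and> v' ! i \<and> b' ! i} * ket b' z)"
  using assms by (simp add: D_op_def apply_op_X_op_ket apply_op_Z_op_ket)

lemma prefix_sum_identity:
  fixes Y V :: "nat \<Rightarrow> bit"
  assumes V: "\<And>k. k \<le> m \<Longrightarrow> V k = (\<Sum>j<k. Y j)"
    and odd: "(\<Sum>j\<le>m. Y j) = 1" and "l \<le> m"
  shows "(\<Sum>j<l. Y j) = (\<Sum>i\<le>m. V i * Y i) + (\<Sum>i<m. (V i + V m) * (Y i + of_bool (i = l)))"
proof -
  have double: "x + x = 0" for x :: bit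
    by (metis mult_2 bit_2_eq_0 mult_zero_left)
  have "(\<Sum>i\<le>m. V i * Y i) + (\<Sum>i<m. (V i + V m) * (Y i + of_bool (i = l)))
      = ((\<Sum>i<m. V i * Y i) + (\<Sum>i<m. V i * Y i)) + V m * (Y m + (\<Sum>i<m. Y i))
        + (\<Sum>i<m. (V i + V m) * of_bool (i = l))"
    by (simp add: lessThan_Suc_atMost[symmetric] algebra_simps sum.distrib sum_distrib_left)
  also have "\<dots> = V m + (if l < m then V l + V m else 0)"
    using odd by (simp add: double lessThan_Suc_atMost[symmetric] add.commute)
  also have "\<dots> = (\<Sum>j<l. Y j)"
    using V \<open>l \<le> m\<close> by (cases "l < m") (simp_all add: double add.assoc[symmetric])
  finally show ?thesis ..
qed

lemma minus_one_power_prefix_count: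
  assumes len: "length y = Suc m" and odd: "odd (count_list y True)" and "l \<le> m"
    and v: "\<And>k. k \<le> m \<Longrightarrow> v ! k = odd (count_list (take k y) True)"
    and v': "\<And>i. i < m \<Longrightarrow> v' ! i = (v ! i \<noteq> v ! m)"
  shows "(-1) ^ card {i. i < Suc m \<and> v ! i \<and> y ! i}
           * (-1) ^ card {i. i < m \<and> v' ! i \<and> take m (flip_at l y) ! i}
         = ((-1 :: 'a::ring_1) ^ count_list (take l y) True)"
proof (rule minus_one_power_add_bit)
  define Y where "Y i = (of_bool (y ! i) :: bit)" for i
  define V where "V i = (of_bool (v ! i) :: bit)" for i
  have V_prefix: "V k = (\<Sum>j<k. Y j)" if "k \<le> m" for k
    using that len by (simp add: V_def v of_nat_bit_eq[symmetric] of_nat_count_list_True Y_def min_absorb2)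
  have "(\<Sum>j\<le>m. Y j) = of_nat (count_list y True)"
    using len by (simp add: of_nat_count_list_True Y_def lessThan_Suc_atMost)
  then have total: "(\<Sum>j\<le>m. Y j) = 1"
    using odd by (simp add: of_nat_bit_eq)
  have "(of_nat (card {i. i < Suc m \<and> v ! i \<and> y ! i}) :: bit) = (\<Sum>i\<le>m. V i * Y i)"
    by (simp only: of_nat_card_eq_sum_of_bool lessThan_Suc_atMost V_def Y_def of_bool_conj)
  moreover have "(of_nat (card {i. i < m \<and> v' ! i \<and> take m (flip_at l y) ! i}) :: bit)
      = (\<Sum>i<m. (V i + V m) * (Y i + of_bool (i = l)))"
    unfolding of_nat_card_eq_sum_of_bool
    using len by (intro sum.cong refl) (simp add: nth_flip_at v' V_def Y_def of_bool_neq_bit)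
  moreover have "(of_nat (count_list (take l y) True) :: bit) = (\<Sum>j<l. Y j)"
    using len \<open>l \<le> m\<close> by (simp add: of_nat_count_list_True Y_def min_absorb2)
  ultimately show "(of_nat (count_list (take l y) True) :: bit)
      = of_nat (card {i. i < Suc m \<and> v ! i \<and> y ! i})
        + of_nat (card {i. i < m \<and> v' ! i \<and> take m (flip_at l y) ! i})"
    using prefix_sum_identity[OF V_prefix total \<open>l \<le> m\<close>] by simp
qed

lemma D_op_psi_reference:
  assumes y: "y \<in> odd_strs n" and "length v' = n - 1"
  defines "yref \<equiv> replicate (n - 1) False @ [True]"
  shows "D_op n (xor_str y yref) v' (psi n yref)
    = (\<lambda>z. \<Sum>l<n. complex_of_real (1 / sqrt (real n))
                   * (-1) ^ card {i. i < n - 1 \<and> v' ! i \<and> take (n - 1) (flip_at l y) ! i}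
                   * ket (take (n - 1) (flip_at l y)) z)"
proof -
  define c where "c = complex_of_real (1 / sqrt (real n))"
  have len_y: "length y = n"
    using y by (simp add: odd_strs_def bitstrings_def)
  then have "n \<noteq> 0"
    using y by (auto simp: odd_strs_def weight_def)
  then have yref: "yref \<in> odd_strs n"
    by (simp add: yref_def odd_strs_def bitstrings_def weight_def)
  have "take l yref = replicate l False" if "l < n" for l
    using that by (simp add: yref_def)
  with yref have psi_yref: "psi n yref = (\<lambda>z. \<Sum>l<n. c * ket (take (n - 1) (flip_at l yref)) z)"
    unfolding psi_odd_expansion[OF yref] c_def by (auto intro!: sum.cong)
  have "xor_str (take (n - 1) (flip_at l yref)) (take (n - 1) (xor_str y yref))
      = take (n - 1) (flip_at l y)" for l
    using len_y \<open>n \<noteq> 0\<close> by (simp add: yref_def xor_str_flip_at flip: take_xor_str)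
  then have D_ket: "D_op n (xor_str y yref) v' (ket (take (n - 1) (flip_at l yref)))
      = (\<lambda>z. (-1) ^ card {i. i < n - 1 \<and> v' ! i \<and> take (n - 1) (flip_at l y) ! i}
             * ket (take (n - 1) (flip_at l y)) z)" for l
    using D_op_ket[of n "xor_str y yref" v' "take (n - 1) (flip_at l yref)"] len_y \<open>length v' = n - 1\<close>
    by (simp add: yref_def)
  show ?thesis
    unfolding psi_yref D_op_lincomb D_ket c_def by (simp add: mult.assoc)
qed

theorem theorem2:
  fixes n :: nat and y :: "bool list"
  assumes "n \<ge> 2" and "y \<in> odd_strs n"
  defines "yref \<equiv> replicate (n - 1) False @ [True]"
  defines "u \<equiv> xor_str y yref"
  defines "v \<equiv> map (\<lambda>k. odd (count_list (take k u) True)) [0..<n]"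
  defines "v' \<equiv> map (\<lambda>i. v ! i \<noteq> v ! (n - 1)) [0..<n - 1]"
  shows "psi n y = (\<lambda>z. (-1) ^ card {i. i < n \<and> v ! i \<and> y ! i} * D_op n u v' (psi n yref) z)"
proof -
  define m where "m = n - 1"
  then have n: "n = Suc m" using assms(1) by simp
  have len_y: "length y = Suc m" and odd_y: "odd (count_list y True)"
    using assms(2) n by (simp_all add: odd_strs_def bitstrings_def weight_def)
  have "take m u = take m y"
    using xor_str_replicate_False[of "take m y"] len_y m_def by (simp add: u_def yref_def take_xor_str)
  then have v: "v ! k = odd (count_list (take k y) True)" if "k \<le> m" for k
    using that n by (simp add: v_def del: upt_Suc) (metis min_absorb1 take_take)
  have v': "length v' = m" "\<And>i. i < m \<Longrightarrow> v' ! i = (v ! i \<noteq> v ! m)"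
    using m_def by (simp_all add: v'_def)
  have sign: "(-1) ^ card {i. i < n \<and> v ! i \<and> y ! i}
      * (-1) ^ card {i. i < m \<and> v' ! i \<and> take m (flip_at l y) ! i}
      = (-1 :: complex) ^ count_list (take l y) True" if "l < n" for l
    using minus_one_power_prefix_count[OF len_y odd_y _ v v'(2), of l] that n by simp
  show ?thesis
    using D_op_psi_reference[OF assms(2) v'(1)[unfolded m_def], folded yref_def u_def m_def]
    unfolding psi_odd_expansion[OF assms(2)] m_def[symmetric]
    by (auto simp: sum_distrib_left sign[symmetric] mult_ac intro!: sum.cong)
qed

end
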